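(* Let $\mathcal{R}$ be a von Neumann algebra and $A\in\mathcal{R}_{sa}$. Then $f_A:\mathcal{D}(\mathcal{R})\to\mathbb{R}$ is upper semicontinuous, i.e. for every $\mathcal{J}_0\in\mathcal{D}(\mathcal{R})$ and every $\varepsilon>0$ there exists $P\in\mathcal{J}_0$ such that $f_A(\mathcal{J})<f_A(\mathcal{J}_0)+\varepsilon$ for all $\mathcal{J}\in\mathcal{D}_P(\mathcal{R})$.
   Context: $\mathcal{P}(\mathcal{R})$ is the projection lattice of $\mathcal{R}$. A dual ideal of $\mathcal{P}(\mathcal{R})$ is a nonempty subset $\mathcal{J}$ with $0\notin\mathcal{J}$, $P,Q\in\mathcal{J}\Rightarrow P\wedge Q\in\mathcal{J}$, and $P\in\mathcal{J},P\le Q\Rightarrow Q\in\mathcal{J}$. $\mathcal{D}(\mathcal{R})$ is the set of dual ideals, with the topology generated by the basis $\mathcal{D}_P(\mathcal{R}):=\{\mathcal{J}\in\mathcal{D}(\mathcal{R}) : P\in\mathcal{J}\}$, $P\in\mathcal{P}(\mathcal{R})$. For $A\in\mathcal{R}_{sa}$ with right-continuous spectral family $(E^A_\lambda)$, $f_A(\mathcal{J}):=\inf\{\lambda : E^A_\lambda\in\mathcal{J}\}$. *)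

theory Defs
  imports "HOL-Analysis.Analysis"
begin

class chilbert = ab_group_add +
  fixes scaleC :: "complex \<Rightarrow> 'a \<Rightarrow> 'a"
    and cinner :: "'a \<Rightarrow> 'a \<Rightarrow> complex"
  assumes scaleC_add_right: "scaleC a (x + y) = scaleC a x + scaleC a y"
    and scaleC_add_left: "scaleC (a + b) x = scaleC a x + scaleC b x"
    and scaleC_scaleC: "scaleC a (scaleC b x) = scaleC (a * b) x"
    and scaleC_one: "scaleC 1 x = x"
    and cinner_add_left: "cinner (x + y) z = cinner x z + cinner y z"
    and cinner_scaleC_left: "cinner (scaleC a x) y = cnj a * cinner x y"
    and cinner_commute: "cinner y x = cnj (cinner x y)"
    and cinner_self_nonneg: "Im (cinner x x) = 0 \<and> Re (cinner x x) \<ge> 0"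
    and cinner_self_eq_0: "cinner x x = 0 \<longleftrightarrow> x = 0"
    and complete:
      "(\<forall>e>0. \<exists>N. \<forall>m\<ge>(N::nat). \<forall>n\<ge>N. sqrt (Re (cinner (X m - X n) (X m - X n))) < e)
        \<Longrightarrow> (\<exists>L. \<forall>e>0. \<exists>N::nat. \<forall>n\<ge>N. sqrt (Re (cinner (X n - L) (X n - L))) < e)"

definition cnorm :: "'h::chilbert \<Rightarrow> real" where
  "cnorm x = sqrt (Re (cinner x x))"

definition bounded_op :: "('h::chilbert \<Rightarrow> 'h) \<Rightarrow> bool" where
  "bounded_op T \<longleftrightarrow> (\<forall>x y. T (x + y) = T x + T y) \<and> (\<forall>a x. T (scaleC a x) = scaleC a (T x))
     \<and> (\<exists>K. \<forall>x. cnorm (T x) \<le> K * cnorm x)"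

text \<open>Hilbert-space adjoint (unique for bounded operators, by the Riesz representation theorem).\<close>
definition adj :: "('h::chilbert \<Rightarrow> 'h) \<Rightarrow> ('h \<Rightarrow> 'h)" where
  "adj T = (SOME S. \<forall>x y. cinner (T x) y = cinner x (S y))"

definition commutant :: "('h::chilbert \<Rightarrow> 'h) set \<Rightarrow> ('h \<Rightarrow> 'h) set" where
  "commutant S = {T. bounded_op T \<and> (\<forall>B\<in>S. T \<circ> B = B \<circ> T)}"

text \<open>A von Neumann algebra: a self-adjoint set of bounded operators equal to its double
  commutant (equivalently, by the bicommutant theorem, a weakly closed unital *-subalgebra).\<close>
definition von_neumann_algebra :: "('h::chilbert \<Rightarrow> 'h) set \<Rightarrow> bool" where
  "von_neumann_algebra R \<longleftrightarrow> R \<subseteq> {T. bounded_op T} \<and> (\<forall>T\<in>R. adj T \<in> R)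
     \<and> R = commutant (commutant R)"

definition self_adjoint_part :: "('h::chilbert \<Rightarrow> 'h) set \<Rightarrow> ('h \<Rightarrow> 'h) set" where
  "self_adjoint_part R = {A \<in> R. adj A = A}"

definition projections :: "('h::chilbert \<Rightarrow> 'h) set \<Rightarrow> ('h \<Rightarrow> 'h) set" where
  "projections R = {P \<in> R. P \<circ> P = P \<and> adj P = P}"

text \<open>Order of projections: P \<le> Q iff PQ = P (i.e. range P \<subseteq> range Q).\<close>
definition proj_le :: "('h::chilbert \<Rightarrow> 'h) \<Rightarrow> ('h \<Rightarrow> 'h) \<Rightarrow> bool" where
  "proj_le P Q \<longleftrightarrow> P \<circ> Q = P"

definition proj_meet :: "('h::chilbert \<Rightarrow> 'h) set \<Rightarrow> ('h \<Rightarrow> 'h) \<Rightarrow> ('h \<Rightarrow> 'h) \<Rightarrow> ('h \<Rightarrow> 'h)" where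
  "proj_meet R P Q = (THE M. M \<in> projections R \<and> proj_le M P \<and> proj_le M Q \<and>
      (\<forall>S\<in>projections R. proj_le S P \<and> proj_le S Q \<longrightarrow> proj_le S M))"

definition zero_op :: "'h::chilbert \<Rightarrow> 'h" where
  "zero_op = (\<lambda>x. 0)"

definition dual_ideals :: "('h::chilbert \<Rightarrow> 'h) set \<Rightarrow> ('h \<Rightarrow> 'h) set set" where
  "dual_ideals R = {J. J \<subseteq> projections R \<and> J \<noteq> {} \<and> zero_op \<notin> J
      \<and> (\<forall>P\<in>J. \<forall>Q\<in>J. proj_meet R P Q \<in> J)
      \<and> (\<forall>P\<in>J. \<forall>Q\<in>projections R. proj_le P Q \<longrightarrow> Q \<in> J)}"

definition dual_ideals_at :: "('h::chilbert \<Rightarrow> 'h) set \<Rightarrow> ('h \<Rightarrow> 'h) \<Rightarrow> ('h \<Rightarrow> 'h) set set" where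
  "dual_ideals_at R P = {J \<in> dual_ideals R. P \<in> J}"

text \<open>Right-continuous spectral resolution (Kadison--Ringrose, Thm. 5.2.2): E^A_\<lambda> is the
  largest projection E in R commuting with A such that AE \<le> \<lambda>E.\<close>
definition spectral_proj :: "('h::chilbert \<Rightarrow> 'h) set \<Rightarrow> ('h \<Rightarrow> 'h) \<Rightarrow> real \<Rightarrow> ('h \<Rightarrow> 'h)" where
  "spectral_proj R A lam = (THE E. E \<in> projections R \<and> A \<circ> E = E \<circ> A
      \<and> (\<forall>x. Re (cinner (A (E x)) x) \<le> lam * Re (cinner (E x) x))
      \<and> (\<forall>F\<in>projections R. A \<circ> F = F \<circ> A
            \<and> (\<forall>x. Re (cinner (A (F x)) x) \<le> lam * Re (cinner (F x) x)) \<longrightarrow> proj_le F E))"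

definition f_obs :: "('h::chilbert \<Rightarrow> 'h) set \<Rightarrow> ('h \<Rightarrow> 'h) \<Rightarrow> ('h \<Rightarrow> 'h) set \<Rightarrow> real" where
  "f_obs R A J = Inf {lam. spectral_proj R A lam \<in> J}"

end

theory Submission
  imports Defs
begin

text \<open>For bounded \<open>A\<close> the quadratic form \<open>Re \<langle>Ax, x\<rangle>\<close> lies between \<open>-K |x|\<^sup>2\<close> and \<open>K |x|\<^sup>2\<close>,
  so the spectral projection \<open>E\<^sub>\<lambda>\<close> is \<open>0\<close> for \<open>\<lambda> < -K\<close> and \<open>1\<close> for \<open>\<lambda> \<ge> K\<close>. Hence for every
  dual ideal \<open>J\<close> the set \<open>{\<lambda>. E\<^sub>\<lambda> \<in> J}\<close> contains \<open>K\<close> and is bounded below by \<open>-K\<close>, and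
  \<open>f\<^sub>A(J) \<le> \<lambda>\<close> whenever \<open>E\<^sub>\<lambda> \<in> J\<close>. Choosing \<open>\<lambda>\<^sub>1 < f\<^sub>A(J\<^sub>0) + \<epsilon>\<close> with \<open>E\<^sub>\<lambda>\<^sub>1 \<in> J\<^sub>0\<close>, the
  projection \<open>P = E\<^sub>\<lambda>\<^sub>1\<close> does the job.\<close>

lemma cinner_zero_left [simp]: "cinner (0::'a::chilbert) y = 0"
proof -
  have "cinner (0 + 0::'a) y = cinner 0 y + cinner 0 y" by (rule cinner_add_left)
  then show ?thesis by simp
qed

lemma cinner_zero_right [simp]: "cinner (x::'a::chilbert) 0 = 0"
  by (metis cinner_zero_left cinner_commute complex_cnj_zero)

lemma cinner_add_right: "cinner (x::'a::chilbert) (y + z) = cinner x y + cinner x z"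
  by (metis cinner_add_left cinner_commute complex_cnj_add)

lemma cinner_diff_left: "cinner ((x::'a::chilbert) - y) z = cinner x z - cinner y z"
  using cinner_add_left[of "x - y" y z] by simp

lemma cinner_diff_right: "cinner (x::'a::chilbert) (y - z) = cinner x y - cinner x z"
  by (metis cinner_diff_left cinner_commute complex_cnj_diff)

lemma cinner_scaleC_right: "cinner (x::'a::chilbert) (scaleC a y) = a * cinner x y"
  by (metis cinner_commute cinner_scaleC_left complex_cnj_cnj complex_cnj_mult)

lemma scaleC_zero_right [simp]: "scaleC a (0::'a::chilbert) = 0"
proof -
  have "scaleC a (0 + 0::'a) = scaleC a 0 + scaleC a 0" by (rule scaleC_add_right)
  then show ?thesis by simp
qed

lemma Re_cinner_self_nonneg: "0 \<le> Re (cinner (x::'a::chilbert) x)"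
  using cinner_self_nonneg by blast

lemma Re_cinner_self_eq_0: "Re (cinner (x::'a::chilbert) x) = 0 \<longleftrightarrow> x = 0"
  using cinner_self_nonneg[of x] cinner_self_eq_0[of x] by (auto simp: complex_eq_iff)

lemma cnorm_nonneg: "0 \<le> cnorm (x::'a::chilbert)"
  by (simp add: cnorm_def Re_cinner_self_nonneg)

lemma Re_cinner_self_eq_cnorm_sq: "Re (cinner (x::'a::chilbert) x) = (cnorm x)\<^sup>2"
  unfolding cnorm_def using Re_cinner_self_nonneg[of x] by simp

lemma Re_cinner_self_add_scaleC:
  fixes u v :: "'a::chilbert"
  shows "Re (cinner (u + scaleC (of_real s) v) (u + scaleC (of_real s) v))
    = Re (cinner u u) + 2 * s * Re (cinner u v) + s\<^sup>2 * Re (cinner v v)"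
proof -
  have "cinner (u + scaleC (of_real s) v) (u + scaleC (of_real s) v)
     = cinner u u + of_real s * cinner u v + of_real s * cinner v u + of_real s * of_real s * cinner v v"
    by (simp add: cinner_add_left cinner_add_right cinner_scaleC_right cinner_scaleC_left algebra_simps)
  moreover have "Re (cinner v u) = Re (cinner u v)" by (subst cinner_commute) simp
  ultimately show ?thesis by (simp add: power2_eq_square)
qed

lemma abs_le_of_quadratic_nonneg:
  fixes a r q K :: real
  assumes K: "K > 0" and "a \<le> K\<^sup>2 * q" and nonneg: "\<And>s. 0 \<le> a + 2 * s * r + s\<^sup>2 * q"
  shows "\<bar>r\<bar> \<le> K * q"
proof -
  have upper: "K * r \<le> K * (K * q)" and lower: "K * (- (K * q)) \<le> K * r"
    using assms(2) nonneg[of "- K"] nonneg[of K] by (simp_all add: power2_eq_square)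
  show ?thesis
    using mult_left_le_imp_le[OF upper K] mult_left_le_imp_le[OF lower K] by (simp add: abs_le_iff)
qed

lemma abs_Re_cinner_le:
  fixes A :: "'a::chilbert \<Rightarrow> 'a"
  assumes "K > 0" and bound: "cnorm (A y) \<le> K * cnorm y"
  shows "\<bar>Re (cinner (A y) y)\<bar> \<le> K * Re (cinner y y)"
proof (rule abs_le_of_quadratic_nonneg[OF \<open>K > 0\<close>])
  have "(cnorm (A y))\<^sup>2 \<le> (K * cnorm y)\<^sup>2"
    using bound cnorm_nonneg by (rule power_mono)
  then show "Re (cinner (A y) (A y)) \<le> K\<^sup>2 * Re (cinner y y)"
    by (simp add: Re_cinner_self_eq_cnorm_sq power_mult_distrib)
  show "0 \<le> Re (cinner (A y) (A y)) + 2 * s * Re (cinner (A y) y) + s\<^sup>2 * Re (cinner y y)" for s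
    using Re_cinner_self_nonneg[of "A y + scaleC (of_real s) y"] unfolding Re_cinner_self_add_scaleC .
qed

lemma bounded_op_zero: "bounded_op T \<Longrightarrow> T 0 = 0"
  unfolding bounded_op_def by (metis add_cancel_right_right)

lemma bounded_op_quadratic_form_bound:
  fixes A :: "'a::chilbert \<Rightarrow> 'a"
  assumes "bounded_op A"
  obtains K where "K > 0" "\<And>y. \<bar>Re (cinner (A y) y)\<bar> \<le> K * Re (cinner y y)"
proof -
  obtain K0 where K0: "\<And>x. cnorm (A x) \<le> K0 * cnorm x"
    using assms unfolding bounded_op_def by blast
  have "cnorm (A y) \<le> max K0 1 * cnorm y" for y
    using K0[of y] mult_right_mono[of K0 "max K0 1" "cnorm y"] cnorm_nonneg[of y] by simp
  then show ?thesis by (intro that[of "max K0 1"] abs_Re_cinner_le) auto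
qed

lemma adj_unique:
  fixes T S :: "'a::chilbert \<Rightarrow> 'a"
  assumes "\<And>x y. cinner (T x) y = cinner x (S y)"
  shows "adj T = S"
proof
  fix y
  have adj: "cinner (T x) y = cinner x (adj T y)" for x
    unfolding adj_def using someI[of "\<lambda>S. \<forall>x y. cinner (T x) y = cinner x (S y)"] assms by blast
  let ?d = "adj T y - S y"
  have "cinner ?d (adj T y) = cinner ?d (S y)"
    using adj[of ?d] assms[of ?d y] by simp
  then have "cinner ?d ?d = 0" by (simp add: cinner_diff_right)
  then have "?d = 0" by (simp only: cinner_self_eq_0)
  then show "adj T y = S y" by simp
qed

lemma id_in_projections:
  assumes "von_neumann_algebra R"
  shows "id \<in> projections R"
proof -
  have "id \<in> commutant (commutant R)"
    unfolding commutant_def bounded_op_def by (auto intro: exI[of _ 1])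
  moreover have "adj id = id" by (rule adj_unique) simp
  ultimately show ?thesis
    using assms unfolding von_neumann_algebra_def projections_def by simp
qed

lemma zero_op_in_projections:
  assumes "von_neumann_algebra R"
  shows "zero_op \<in> projections R"
proof -
  have "bounded_op zero_op"
    unfolding bounded_op_def zero_op_def by (auto simp: cnorm_def intro: exI[of _ 0])
  then have "zero_op \<in> commutant (commutant R)"
    unfolding commutant_def by (auto simp: zero_op_def bounded_op_zero)
  moreover have "adj zero_op = zero_op" by (rule adj_unique) (simp add: zero_op_def)
  ultimately show ?thesis
    using assms unfolding von_neumann_algebra_def projections_def by (simp add: zero_op_def comp_def)
qed

lemma id_in_dual_ideal:
  assumes "von_neumann_algebra R" "J \<in> dual_ideals R"
  shows "id \<in> J"
proof -
  obtain P where "P \<in> J" using assms(2) unfolding dual_ideals_def by blast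
  moreover have "P \<circ> id = P" by simp
  ultimately show ?thesis
    using assms id_in_projections unfolding dual_ideals_def proj_le_def by blast
qed

lemma zero_op_notin_dual_ideal: "J \<in> dual_ideals R \<Longrightarrow> zero_op \<notin> J"
  unfolding dual_ideals_def by blast

definition spectral_below :: "('h::chilbert \<Rightarrow> 'h) set \<Rightarrow> ('h \<Rightarrow> 'h) \<Rightarrow> real \<Rightarrow> ('h \<Rightarrow> 'h) \<Rightarrow> bool" where
  "spectral_below R A lam E \<longleftrightarrow> E \<in> projections R \<and> A \<circ> E = E \<circ> A
     \<and> (\<forall>x. Re (cinner (A (E x)) x) \<le> lam * Re (cinner (E x) x))"

lemma spectral_proj_altdef:
  "spectral_proj R A lam =
     (THE E. spectral_below R A lam E \<and> (\<forall>F. spectral_below R A lam F \<longrightarrow> proj_le F E))"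
  unfolding spectral_proj_def spectral_below_def by (rule arg_cong[where f = The]) blast

lemma spectral_proj_eq_id:
  assumes "id \<in> projections R" and "\<And>x. Re (cinner (A x) x) \<le> lam * Re (cinner x x)"
  shows "spectral_proj R A lam = id"
  unfolding spectral_proj_altdef
proof (rule the_equality)
  show "spectral_below R A lam id \<and> (\<forall>F. spectral_below R A lam F \<longrightarrow> proj_le F id)"
    using assms by (simp add: spectral_below_def proj_le_def)
next
  fix E assume "spectral_below R A lam E \<and> (\<forall>F. spectral_below R A lam F \<longrightarrow> proj_le F E)"
  then have "proj_le id E"
    using assms by (simp add: spectral_below_def)
  then show "E = id" unfolding proj_le_def by simp
qed

lemma spectral_below_eq_zero_op:
  assumes lower: "\<And>x. mu * Re (cinner x x) \<le> Re (cinner (A x) x)" and "lam < mu"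
    and "spectral_below R A lam E"
  shows "E = zero_op"
proof
  fix x
  let ?y = "E x"
  have "E \<circ> E = E" using assms(3) unfolding spectral_below_def projections_def by simp
  then have "E ?y = ?y" by (metis comp_apply)
  then have "Re (cinner (A ?y) ?y) \<le> lam * Re (cinner ?y ?y)"
    using assms(3) unfolding spectral_below_def by metis
  with lower[of ?y] have "(mu - lam) * Re (cinner ?y ?y) \<le> 0"
    by (simp add: algebra_simps)
  with \<open>lam < mu\<close> Re_cinner_self_nonneg[of ?y] have "Re (cinner ?y ?y) = 0"
    by (simp add: mult_le_0_iff)
  then show "E x = zero_op x" by (simp add: Re_cinner_self_eq_0 zero_op_def)
qed

lemma spectral_proj_eq_zero_op:
  assumes "zero_op \<in> projections R" "A 0 = 0"
    and "\<And>x. mu * Re (cinner x x) \<le> Re (cinner (A x) x)" "lam < mu"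
  shows "spectral_proj R A lam = zero_op"
  unfolding spectral_proj_altdef
proof (rule the_equality)
  have "spectral_below R A lam zero_op"
    using assms(1,2) by (simp add: spectral_below_def zero_op_def comp_def)
  moreover have "proj_le F zero_op" if "spectral_below R A lam F" for F
    using spectral_below_eq_zero_op[OF assms(3,4) that] by (simp add: proj_le_def zero_op_def comp_def)
  ultimately show "spectral_below R A lam zero_op
      \<and> (\<forall>F. spectral_below R A lam F \<longrightarrow> proj_le F zero_op)" by blast
next
  fix E assume "spectral_below R A lam E \<and> (\<forall>F. spectral_below R A lam F \<longrightarrow> proj_le F E)"
  then show "E = zero_op" using spectral_below_eq_zero_op[OF assms(3,4)] by blast
qed

lemma spectral_levels_bounded:
  assumes "von_neumann_algebra R" "bounded_op A"
  obtains a b where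
    "\<And>J lam. J \<in> dual_ideals R \<Longrightarrow> spectral_proj R A lam \<in> J \<Longrightarrow> a \<le> lam"
    "\<And>J. J \<in> dual_ideals R \<Longrightarrow> spectral_proj R A b \<in> J"
proof -
  obtain K where "K > 0" and K: "\<And>y. \<bar>Re (cinner (A y) y)\<bar> \<le> K * Re (cinner y y)"
    using bounded_op_quadratic_form_bound[OF assms(2)] by blast
  have upper: "Re (cinner (A x) x) \<le> K * Re (cinner x x)"
    and lower: "- K * Re (cinner x x) \<le> Re (cinner (A x) x)" for x
    using abs_le_D1[OF K[of x]] abs_le_D2[OF K[of x]] by simp_all
  have "spectral_proj R A K = id"
    using upper by (intro spectral_proj_eq_id id_in_projections assms(1))
  moreover have "spectral_proj R A lam = zero_op" if "lam < - K" for lam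
    using lower that bounded_op_zero[OF assms(2)]
    by (intro spectral_proj_eq_zero_op[where mu = "- K"] zero_op_in_projections assms(1))
  ultimately show ?thesis
    using that[of "- K" K] id_in_dual_ideal[OF assms(1)] zero_op_notin_dual_ideal
    by (metis not_le)
qed

lemma f_obs_le:
  assumes "\<And>lam. spectral_proj R A lam \<in> J \<Longrightarrow> a \<le> lam" and "spectral_proj R A lam \<in> J"
  shows "f_obs R A J \<le> lam"
proof -
  have "bdd_below {lam. spectral_proj R A lam \<in> J}"
    using assms(1) by (intro bdd_belowI) simp
  then show ?thesis
    unfolding f_obs_def using assms(2) by (simp add: cInf_lower)
qed

theorem proposition2p11:
  fixes R :: "('h::chilbert \<Rightarrow> 'h) set" and A :: "'h \<Rightarrow> 'h"
  assumes "von_neumann_algebra R"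
    and "A \<in> self_adjoint_part R"
    and "J0 \<in> dual_ideals R"
    and "\<epsilon> > 0"
  shows "\<exists>P\<in>J0. \<forall>J\<in>dual_ideals_at R P. f_obs R A J < f_obs R A J0 + \<epsilon>"
proof -
  have "bounded_op A"
    using assms(1,2) unfolding von_neumann_algebra_def self_adjoint_part_def by blast
  then obtain a b where bot: "\<And>J lam. J \<in> dual_ideals R \<Longrightarrow> spectral_proj R A lam \<in> J \<Longrightarrow> a \<le> lam"
    and top: "\<And>J. J \<in> dual_ideals R \<Longrightarrow> spectral_proj R A b \<in> J"
    by (rule spectral_levels_bounded[OF assms(1)]) (rule that)
  have "{lam. spectral_proj R A lam \<in> J0} \<noteq> {}"
    using top[OF assms(3)] by blast
  moreover have "Inf {lam. spectral_proj R A lam \<in> J0} < f_obs R A J0 + \<epsilon>"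
    using assms(4) unfolding f_obs_def by simp
  ultimately obtain lam1 where lam1: "spectral_proj R A lam1 \<in> J0" "lam1 < f_obs R A J0 + \<epsilon>"
    using cInf_lessD by (metis mem_Collect_eq)
  show ?thesis
  proof (intro bexI ballI)
    fix J assume "J \<in> dual_ideals_at R (spectral_proj R A lam1)"
    then have "f_obs R A J \<le> lam1"
      unfolding dual_ideals_at_def using bot by (blast intro: f_obs_le)
    with lam1(2) show "f_obs R A J < f_obs R A J0 + \<epsilon>" by simp
  qed (fact lam1(1))
qed

end
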